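(* Let $A$ be a finite alphabet with $|A|=k$, and let $L\subseteq A^*$ be finite and nonempty. Let $\ell$ be the length of the longest word in $L$. Then $1+k(\ell^{1/k}-2)<h(L)\leq \ell+1$.
   Context: For $n\in\mathbb{N}$, $u\sim_n v$ iff $u$ and $v$ have exactly the same (scattered) subwords of length at most $n$. A language $L$ is $n$-PT if it is a union of $\sim_n$-classes, and $h(L)$ is the least $n$ such that $L$ is $n$-PT. *)

theory Defs
  imports Complex_Main "HOL-Library.Sublist"
begin

definition subwords_upto :: "nat \<Rightarrow> 'a list \<Rightarrow> 'a list set" where
  "subwords_upto n u = {w. subseq w u \<and> length w \<le> n}"

definition simeq_n :: "nat \<Rightarrow> 'a list \<Rightarrow> 'a list \<Rightarrow> bool" where
  "simeq_n n u v \<longleftrightarrow> subwords_upto n u = subwords_upto n v"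

definition n_PT :: "'a set \<Rightarrow> nat \<Rightarrow> 'a list set \<Rightarrow> bool" where
  "n_PT A n L \<longleftrightarrow> (\<forall>u \<in> lists A. \<forall>v \<in> lists A. simeq_n n u v \<longrightarrow> (u \<in> L \<longleftrightarrow> v \<in> L))"

definition h :: "'a set \<Rightarrow> 'a list set \<Rightarrow> nat" where
  "h A L = (LEAST n. n_PT A n L)"

end

theory Submission
  imports Defs
begin

text \<open>
  Upper bound: if \<open>u \<sim>\<^bsub>l+1\<^esub> v\<close> and \<open>|u| \<le> l\<close>, then \<open>u\<close> is a subword of \<open>v\<close> and
  \<open>v\<close> has no subword of length \<open>l + 1\<close>, so \<open>u = v\<close>; hence \<open>L\<close> is \<open>(l+1)\<close>-PT.

  Lower bound: for \<open>n = h(L)\<close> a longest word \<open>u\<close> of \<open>L\<close> is \<open>\<sim>\<^sub>n\<close>-maximal: no longer word over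
  its alphabet \<open>B\<close> is \<open>\<sim>\<^sub>n\<close>-equivalent to it. Cut \<open>u\<close> into arches,
  \<open>u = r\<^sub>1 a\<^sub>1 \<cdots> r\<^sub>M a\<^sub>M s\<close>, where \<open>r\<^sub>i a\<^sub>i\<close> is the shortest factor containing all of \<open>B\<close>
  and \<open>s\<close> misses a letter of \<open>B\<close>. Then \<open>M < n\<close>, as otherwise \<open>u \<sim>\<^sub>n u a\<close>. A product of
  \<open>i\<close> arches contains every word of length \<open>i\<close> over \<open>B\<close>, and inside such universal contexts
  each \<open>r\<^sub>i\<close> is \<open>\<sim>\<^bsub>n-M+1\<^esub>\<close>-maximal and \<open>s\<close> is \<open>\<sim>\<^bsub>n-M\<^esub>\<close>-maximal, all over smaller alphabets.
  Induction on \<open>|B|\<close> and the AM-GM inequality give \<open>|u| + 1 \<le> ((n - 1)/|B| + 2)\<^bsup>|B|\<^esup>\<close>,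
  which rearranges to the claimed lower bound on \<open>n\<close>.
\<close>

definition subword_universal :: "'a set \<Rightarrow> nat \<Rightarrow> 'a list \<Rightarrow> bool" where
  "subword_universal B p P \<longleftrightarrow> (\<forall>w. set w \<subseteq> B \<longrightarrow> length w \<le> p \<longrightarrow> subseq w P)"

definition simeq_maximal :: "nat \<Rightarrow> 'a list \<Rightarrow> bool" where
  "simeq_maximal n u \<longleftrightarrow> (\<forall>v. set v \<subseteq> set u \<longrightarrow> simeq_n n u v \<longrightarrow> length v \<le> length u)"

lemma simeq_n_iff: "simeq_n n u v \<longleftrightarrow> (\<forall>w. length w \<le> n \<longrightarrow> (subseq w u \<longleftrightarrow> subseq w v))"
  unfolding simeq_n_def subwords_upto_def by auto

lemma simeq_n_sym: "simeq_n n u v \<Longrightarrow> simeq_n n v u"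
  unfolding simeq_n_def by simp

lemma subseq_set_subset: "subseq v u \<Longrightarrow> set v \<subseteq> set u"
  by (induction rule: list_emb.induct) auto

lemma subword_universal_0 [simp]: "subword_universal B 0 P"
  unfolding subword_universal_def by simp

lemma subword_universal_mono: "subword_universal B p P \<Longrightarrow> q \<le> p \<Longrightarrow> subword_universal B q P"
  unfolding subword_universal_def by auto

lemma subword_universal_Suc_0: "B \<subseteq> set r \<Longrightarrow> subword_universal B (Suc 0) r"
  unfolding subword_universal_def
proof (intro allI impI)
  fix w :: "'a list" assume "B \<subseteq> set r" "set w \<subseteq> B" "length w \<le> Suc 0"
  then have "w = [] \<or> (\<exists>c \<in> set r. w = [c])"
    by (cases w) auto
  then show "subseq w r"
    by (auto simp: subseq_singleton_left)
qed

lemma subword_universal_append: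
  assumes "subword_universal B p P" and "subword_universal B q Q"
  shows "subword_universal B (p + q) (P @ Q)"
  unfolding subword_universal_def
proof (intro allI impI)
  fix w assume w: "set w \<subseteq> B" "length w \<le> p + q"
  have "set (take p w) \<subseteq> B" "set (drop p w) \<subseteq> B"
    using w(1) set_take_subset[of p w] set_drop_subset[of p w] by auto
  moreover have "length (take p w) \<le> p" "length (drop p w) \<le> q"
    using w(2) by simp_all
  ultimately have "subseq (take p w) P" "subseq (drop p w) Q"
    using assms unfolding subword_universal_def by blast+
  then have "subseq (take p w @ drop p w) (P @ Q)"
    by (rule list_emb_append_mono)
  then show "subseq w (P @ Q)"
    by simp
qed

lemma split_middle_bounded:
  fixes w1 w2 w3 :: "'a list"
  assumes "length w1 + length w2 + length w3 \<le> t + p + q"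
  obtains \<alpha> \<beta> \<gamma> where "w2 = \<alpha> @ \<beta> @ \<gamma>" and "length \<beta> \<le> t"
    and "\<alpha> = [] \<or> length w1 + length \<alpha> \<le> p" and "\<gamma> = [] \<or> length \<gamma> + length w3 \<le> q"
proof -
  define rest where "rest = drop (p - length w1) w2"
  define c where "c = length rest - (q - length w3)"
  show thesis
  proof
    show "w2 = take (p - length w1) w2 @ take c rest @ drop c rest"
      unfolding rest_def by (simp only: append_take_drop_id)
    show "length (take c rest) \<le> t"
      using assms unfolding c_def rest_def by simp
    show "take (p - length w1) w2 = [] \<or> length w1 + length (take (p - length w1) w2) \<le> p"
      by auto
    show "drop c rest = [] \<or> length (drop c rest) + length w3 \<le> q"
      unfolding c_def by auto
  qed
qed

text \<open>
  The universal contexts absorb up to \<open>p\<close> letters on the left and \<open>q\<close> letters on the right of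
  the part of \<open>w\<close> embedded into \<open>x'\<close>; the remaining middle part has length at most \<open>t\<close> and
  therefore also embeds into \<open>x\<close>.
\<close>

lemma subseq_universal_context:
  assumes P: "subword_universal B p P" "set P \<subseteq> B" and S: "subword_universal B q S" "set S \<subseteq> B"
    and "set x' \<subseteq> B" and "simeq_n t x x'"
    and "length w \<le> t + p + q" and "subseq w (P @ x' @ S)"
  shows "subseq w (P @ x @ S)"
proof -
  obtain w1 w' where "w = w1 @ w'" "subseq w1 P" "subseq w' (x' @ S)"
    using assms(8) by (rule subseq_appendE)
  moreover obtain w2 w3 where "w' = w2 @ w3" "subseq w2 x'" "subseq w3 S"
    using \<open>subseq w' (x' @ S)\<close> by (rule subseq_appendE)
  ultimately have w: "w = w1 @ w2 @ w3" and sub: "subseq w1 P" "subseq w2 x'" "subseq w3 S"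
    by simp_all
  have w2B: "set w2 \<subseteq> B"
    using subseq_set_subset[OF sub(2)] assms(5) by blast
  obtain \<alpha> \<beta> \<gamma> where w2: "w2 = \<alpha> @ \<beta> @ \<gamma>" and "length \<beta> \<le> t"
    and \<alpha>: "\<alpha> = [] \<or> length w1 + length \<alpha> \<le> p" and \<gamma>: "\<gamma> = [] \<or> length \<gamma> + length w3 \<le> q"
  proof (rule split_middle_bounded)
    show "length w1 + length w2 + length w3 \<le> t + p + q"
      using assms(7) w by simp
  qed
  have "subseq \<beta> w2"
    unfolding w2 by (intro subseq_drop_many subseq_rev_drop_many) simp
  then have "subseq \<beta> x'"
    using sub(2) by (rule subseq_order.trans)
  with \<open>length \<beta> \<le> t\<close> have "subseq \<beta> x"
    using assms(6) unfolding simeq_n_iff by blast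
  moreover have "subseq (w1 @ \<alpha>) P"
  proof (cases "\<alpha> = []")
    case False
    have "set (w1 @ \<alpha>) \<subseteq> B"
      using subseq_set_subset[OF sub(1)] P(2) w2B unfolding w2 by auto
    moreover have "length (w1 @ \<alpha>) \<le> p"
      using False \<alpha> by simp
    ultimately show ?thesis
      using P(1) unfolding subword_universal_def by blast
  qed (simp add: sub(1))
  moreover have "subseq (\<gamma> @ w3) S"
  proof (cases "\<gamma> = []")
    case False
    have "set (\<gamma> @ w3) \<subseteq> B"
      using subseq_set_subset[OF sub(3)] S(2) w2B unfolding w2 by auto
    moreover have "length (\<gamma> @ w3) \<le> q"
      using False \<gamma> by simp
    ultimately show ?thesis
      using S(1) unfolding subword_universal_def by blast
  qed (simp add: sub(3))
  ultimately have "subseq ((w1 @ \<alpha>) @ \<beta> @ (\<gamma> @ w3)) (P @ x @ S)"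
    by (intro list_emb_append_mono)
  then show ?thesis
    using w w2 by simp
qed

lemma simeq_n_universal_context:
  assumes "subword_universal B p P" "set P \<subseteq> B" "subword_universal B q S" "set S \<subseteq> B"
    and "set x \<subseteq> B" "set x' \<subseteq> B" "simeq_n t x x'" "n \<le> t + p + q"
  shows "simeq_n n (P @ x @ S) (P @ x' @ S)"
  unfolding simeq_n_iff
  using subseq_universal_context[OF assms(1-4,6,7)]
    subseq_universal_context[OF assms(1-5) simeq_n_sym[OF assms(7)]] assms(8)
  by (meson order_trans)

lemma simeq_maximal_universal_context:
  assumes "simeq_maximal n (P @ x @ S)"
    and "subword_universal B p P" "set P \<subseteq> B" "subword_universal B q S" "set S \<subseteq> B"
    and "set x \<subseteq> B" "n \<le> t + p + q"
  shows "simeq_maximal t x"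
  unfolding simeq_maximal_def
proof (intro allI impI)
  fix v assume "set v \<subseteq> set x" and "simeq_n t x v"
  then have "simeq_n n (P @ x @ S) (P @ v @ S)"
    using simeq_n_universal_context[OF assms(2-6)] assms(6,7) by blast
  moreover have "set (P @ v @ S) \<subseteq> set (P @ x @ S)"
    using \<open>set v \<subseteq> set x\<close> by auto
  ultimately have "length (P @ v @ S) \<le> length (P @ x @ S)"
    using assms(1) unfolding simeq_maximal_def by blast
  then show "length v \<le> length x"
    by simp
qed

lemma simeq_n_append_letter:
  assumes "subword_universal (set u) n u" and "a \<in> set u"
  shows "simeq_n n u (u @ [a])"
  unfolding simeq_n_iff
proof (intro allI impI iffI)
  fix w :: "'a list"
  show "subseq w u \<Longrightarrow> subseq w (u @ [a])"
    by (rule subseq_rev_drop_many)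
  assume "length w \<le> n" and "subseq w (u @ [a])"
  then have "set w \<subseteq> set u"
    using subseq_set_subset assms(2) by fastforce
  with \<open>length w \<le> n\<close> show "subseq w u"
    using assms(1) unfolding subword_universal_def by blast
qed

lemma simeq_maximal_not_universal:
  assumes "simeq_maximal n u" and "u \<noteq> []"
  shows "\<not> subword_universal (set u) n u"
proof
  assume "subword_universal (set u) n u"
  then have "simeq_n n u (u @ [hd u])"
    using assms(2) by (intro simeq_n_append_letter) simp_all
  moreover have "set (u @ [hd u]) \<subseteq> set u"
    using assms(2) by simp
  ultimately have "length (u @ [hd u]) \<le> length u"
    using assms(1) unfolding simeq_maximal_def by blast
  then show False
    by simp
qed

inductive arch_factorization :: "'a set \<Rightarrow> nat \<Rightarrow> 'a list \<Rightarrow> bool" for B where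
  rest: "set s \<subset> B \<Longrightarrow> arch_factorization B 0 s"
| arch: "a \<notin> set r \<Longrightarrow> insert a (set r) = B \<Longrightarrow> arch_factorization B m z
    \<Longrightarrow> arch_factorization B (Suc m) (r @ a # z)"

lemma arch_factorization_set: "arch_factorization B m z \<Longrightarrow> set z \<subseteq> B"
  by (induction rule: arch_factorization.induct) auto

lemma arch_factorization_universal: "arch_factorization B m z \<Longrightarrow> subword_universal B m z"
proof (induction rule: arch_factorization.induct)
  case (arch a r m z)
  then have "subword_universal B (Suc 0 + m) ((r @ [a]) @ z)"
    by (intro subword_universal_append subword_universal_Suc_0) auto
  then show ?case
    by simp
qed simp

lemma split_first_arch:
  assumes "z \<noteq> []"
  shows "\<exists>r a s. z = r @ a # s \<and> a \<notin> set r \<and> insert a (set r) = set z"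
  using assms
proof (induction z rule: rev_induct)
  case (snoc c z)
  show ?case
  proof (cases "c \<in> set z")
    case False
    then show ?thesis
      by (intro exI[of _ z] exI[of _ c] exI[of _ "[]"]) auto
  next
    case True
    then have "z \<noteq> []"
      by auto
    then obtain r a s where "z = r @ a # s" "a \<notin> set r" "insert a (set r) = set z"
      using snoc.IH by blast
    with True show ?thesis
      by (intro exI[of _ r] exI[of _ a] exI[of _ "s @ [c]"]) auto
  qed
qed simp

lemma arch_factorization_exists:
  assumes "B \<noteq> {}" and "set z \<subseteq> B"
  shows "\<exists>m. arch_factorization B m z"
  using assms(2)
proof (induction "length z" arbitrary: z rule: less_induct)
  case less
  show ?case
  proof (cases "set z = B")
    case False
    with less.prems show ?thesis
      by (blast intro: arch_factorization.rest)
  next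
    case True
    with assms(1) have "z \<noteq> []"
      by auto
    then obtain r a s where z: "z = r @ a # s" "a \<notin> set r" "insert a (set r) = set z"
      using split_first_arch by blast
    with less obtain m where "arch_factorization B m s"
      by fastforce
    with z True have "arch_factorization B (Suc m) z"
      by (auto intro: arch_factorization.arch)
    then show ?thesis ..
  qed
qed

lemma arch_factorization_count_less:
  assumes "simeq_maximal n u" and "u \<noteq> []" and "arch_factorization (set u) M u"
  shows "M < n"
proof (rule ccontr)
  assume "\<not> M < n"
  then have "subword_universal (set u) n u"
    using subword_universal_mono[OF arch_factorization_universal[OF assms(3)]] by simp
  with simeq_maximal_not_universal[OF assms(1,2)] show False ..
qed

text \<open>
  The base is chosen so that AM-GM turns the arch recursion into
  \<open>maximal_length_bound_step\<close>; for \<open>j = 0\<close> it involves a division by zero, but the bound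
  is \<open>1\<close> regardless.
\<close>

definition maximal_length_bound :: "nat \<Rightarrow> nat \<Rightarrow> real" where
  "maximal_length_bound j n = ((real n - 1) / real j + 2) ^ j"

lemma one_le_maximal_length_base: "1 \<le> (real n - 1) / real j + 2"
proof -
  have "-1 \<le> (real n - 1) / real j"
    by (cases "j = 0") (simp_all add: field_simps)
  then show ?thesis
    by simp
qed

lemma one_le_maximal_length_bound: "1 \<le> maximal_length_bound j n"
  unfolding maximal_length_bound_def by (intro one_le_power one_le_maximal_length_base)

lemma maximal_length_bound_mono:
  assumes "n \<le> n'"
  shows "maximal_length_bound j n \<le> maximal_length_bound j n'"
  unfolding maximal_length_bound_def
proof (rule power_mono)
  show "0 \<le> (real n - 1) / real j + 2"
    using one_le_maximal_length_base[of n j] by linarith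
  show "(real n - 1) / real j + 2 \<le> (real n' - 1) / real j + 2"
    using assms by (simp add: divide_right_mono)
qed

lemma mult_power_le_mean_power:
  fixes x y :: real
  assumes "0 \<le> x" and "0 < y"
  shows "x * y ^ j \<le> ((x + real j * y) / real (Suc j)) ^ Suc j"
proof -
  define s where "s = (x + real j * y) / real (Suc j)"
  have "-1 \<le> s / y - 1"
    using assms unfolding s_def by (simp add: field_simps)
  from Bernoulli_inequality[OF this, of "Suc j"]
  have "1 + real (Suc j) * (s / y - 1) \<le> (s / y) ^ Suc j"
    by simp
  then have "(1 + real (Suc j) * (s / y - 1)) * y ^ Suc j \<le> (s / y) ^ Suc j * y ^ Suc j"
    using assms(2) by (intro mult_right_mono) simp_all
  also have "(s / y) ^ Suc j * y ^ Suc j = s ^ Suc j"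
    using assms(2) by (simp add: power_divide)
  also have "(1 + real (Suc j) * (s / y - 1)) * y ^ Suc j
      = y ^ Suc j + (real (Suc j) * s - real (Suc j) * y) * y ^ j"
    using assms(2) by (simp add: field_simps)
  also have "real (Suc j) * s = x + real j * y"
    unfolding s_def by simp
  also have "y ^ Suc j + (x + real j * y - real (Suc j) * y) * y ^ j = x * y ^ j"
    by (simp add: algebra_simps)
  finally show ?thesis
    unfolding s_def .
qed

lemma maximal_length_bound_step:
  assumes "M < n"
  shows "real (Suc M) * maximal_length_bound j (n - M + 1) \<le> maximal_length_bound (Suc j) n"
proof -
  define y where "y = real (n - M) / real j + 2"
  have "0 < y"
    unfolding y_def by (simp add: add_nonneg_pos)
  have "real (Suc M) + real j * y \<le> real n + 2 * real j + 1"
    using assms unfolding y_def by (cases "j = 0") (simp_all add: field_simps)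
  then have "(real (Suc M) + real j * y) / real (Suc j) \<le> (real n + 2 * real j + 1) / real (Suc j)"
    by (simp add: divide_right_mono)
  also have "\<dots> = (real n - 1) / real (Suc j) + 2"
    by (simp add: field_simps)
  finally have mean: "(real (Suc M) + real j * y) / real (Suc j) \<le> (real n - 1) / real (Suc j) + 2" .
  have "real (Suc M) * maximal_length_bound j (n - M + 1) = real (Suc M) * y ^ j"
    unfolding maximal_length_bound_def y_def by simp
  also have "\<dots> \<le> ((real (Suc M) + real j * y) / real (Suc j)) ^ Suc j"
    using \<open>0 < y\<close> by (intro mult_power_le_mean_power) simp_all
  also have "\<dots> \<le> maximal_length_bound (Suc j) n"
    unfolding maximal_length_bound_def using mean \<open>0 < y\<close> by (intro power_mono) simp_all
  finally show ?thesis .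
qed

lemma arch_factorization_length_bound:
  fixes z :: "'a list"
  assumes "arch_factorization B m z" and "finite B" and "card B \<le> Suc j"
    and "subword_universal B p P" and "set P \<subseteq> B" and "simeq_maximal n (P @ z)"
    and "p + m = M" and "M < n"
    and smaller_alphabet: "\<And>t (v :: 'a list). card (set v) \<le> j \<Longrightarrow> simeq_maximal t v
      \<Longrightarrow> real (length v) + 1 \<le> maximal_length_bound j t"
  shows "real (length z) + 1 \<le> real (Suc m) * maximal_length_bound j (n - M + 1)"
  using assms(1,4-7)
proof (induction arbitrary: P p rule: arch_factorization.induct)
  case (rest s)
  have "card (set s) \<le> j"
    using psubset_card_mono[OF \<open>finite B\<close> rest.hyps] assms(3) by simp
  moreover have "simeq_maximal (n - M) s"
    using simeq_maximal_universal_context[of n P s "[]" B p 0] rest assms(8) by simp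
  ultimately have "real (length s) + 1 \<le> maximal_length_bound j (n - M)"
    by (rule smaller_alphabet)
  also have "\<dots> \<le> maximal_length_bound j (n - M + 1)"
    by (rule maximal_length_bound_mono) simp
  finally show ?case
    by simp
next
  case (arch a r m z)
  have "set z \<subseteq> B" and "subword_universal B m z"
    using arch_factorization_set[OF arch.hyps(3)] arch_factorization_universal[OF arch.hyps(3)] .
  then have suffix: "subword_universal B m (a # z)" "set (a # z) \<subseteq> B"
    using subword_universal_append[OF subword_universal_0, of B m z "[a]"] arch.hyps(2) by auto
  have "card (set r) \<le> j"
    using arch.hyps(1,2) assms(2,3) card_insert_disjoint[of "set r" a] by simp
  moreover have "simeq_maximal (n - M + 1) r"
  proof (rule simeq_maximal_universal_context[OF arch.prems(3,1,2) suffix])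
    show "set r \<subseteq> B"
      using arch.hyps(2) by auto
    show "n \<le> n - M + 1 + p + m"
      using arch.prems(4) assms(8) by simp
  qed
  ultimately have "real (length r) + 1 \<le> maximal_length_bound j (n - M + 1)"
    by (rule smaller_alphabet)
  moreover have "real (length z) + 1 \<le> real (Suc m) * maximal_length_bound j (n - M + 1)"
  proof (rule arch.IH)
    show "subword_universal B (Suc p) (P @ r @ [a])"
      using subword_universal_append[OF arch.prems(1) subword_universal_Suc_0, of "r @ [a]"]
        arch.hyps(2) by simp
  qed (use arch.prems arch.hyps(2) in auto)
  ultimately show ?case
    by (simp add: algebra_simps)
qed

lemma simeq_maximal_length_bound:
  "card (set u) \<le> j \<Longrightarrow> simeq_maximal n u \<Longrightarrow> real (length u) + 1 \<le> maximal_length_bound j n"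
proof (induction j arbitrary: n u)
  case 0
  then show ?case
    by (simp add: maximal_length_bound_def)
next
  case (Suc j)
  show ?case
  proof (cases "u = []")
    case True
    then show ?thesis
      using one_le_maximal_length_bound by simp
  next
    case False
    then obtain M where M: "arch_factorization (set u) M u"
      using arch_factorization_exists[of "set u" u] by auto
    have "M < n"
      using arch_factorization_count_less[OF Suc.prems(2) False M] .
    have "real (length u) + 1 \<le> real (Suc M) * maximal_length_bound j (n - M + 1)"
      using arch_factorization_length_bound[OF M _ _ _ _ _ _ _ Suc.IH, of 0 "[]" n M]
        Suc.prems \<open>M < n\<close> by simp
    also have "\<dots> \<le> maximal_length_bound (Suc j) n"
      using \<open>M < n\<close> by (rule maximal_length_bound_step)
    finally show ?thesis .
  qed
qed

lemma less_of_maximal_length_bound: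
  assumes "0 < k" and "real l + 1 \<le> maximal_length_bound k n"
  shows "1 + real k * (real l powr (1 / real k) - 2) < real n"
proof -
  define b where "b = (real n - 1) / real k + 2"
  have "0 < b"
    using one_le_maximal_length_base[of n k] unfolding b_def by linarith
  have "real l < b ^ k"
    using assms(2) unfolding b_def maximal_length_bound_def by simp
  then have "real l powr (1 / real k) < (b ^ k) powr (1 / real k)"
    using assms(1) by (intro powr_less_mono2) auto
  also have "(b ^ k) powr (1 / real k) = b"
    using \<open>0 < b\<close> assms(1) by (simp add: powr_realpow[symmetric] powr_powr)
  finally have "real k * (real l powr (1 / real k) - 2) < real k * (b - 2)"
    using assms(1) by simp
  also have "\<dots> = real n - 1"
    unfolding b_def using assms(1) by simp
  finally show ?thesis
    by simp
qed

lemma simeq_n_Suc_short_eq: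
  assumes "simeq_n (Suc l) u v" and "length u \<le> l"
  shows "v = u"
proof -
  have "subseq u v"
    using assms subseq_order.refl[of u] unfolding simeq_n_iff by (metis le_SucI)
  moreover have "subseq (take (Suc l) v) u"
    using assms(1) prefix_imp_subseq[OF take_is_prefix] unfolding simeq_n_iff by simp
  then have "length v \<le> l"
    using list_emb_length assms(2) by fastforce
  then have "subseq v u"
    using assms(1) unfolding simeq_n_iff by auto
  ultimately show ?thesis
    using subseq_order.antisym by blast
qed

lemma n_PT_Suc_if_length_le:
  assumes "\<And>w. w \<in> L \<Longrightarrow> length w \<le> l"
  shows "n_PT A (Suc l) L"
  unfolding n_PT_def
proof (intro ballI impI)
  fix u v assume "u \<in> lists A" "v \<in> lists A" "simeq_n (Suc l) u v"
  then show "u \<in> L \<longleftrightarrow> v \<in> L"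
    using assms simeq_n_Suc_short_eq[of l u v] simeq_n_Suc_short_eq[of l v u] simeq_n_sym
    by blast
qed

lemma h_le: "n_PT A n L \<Longrightarrow> h A L \<le> n"
  unfolding h_def by (rule Least_le)

lemma n_PT_h: "n_PT A n L \<Longrightarrow> n_PT A (h A L) L"
  unfolding h_def by (rule LeastI)

lemma longest_word_simeq_maximal:
  assumes "n_PT A n L" and "L \<subseteq> lists A" and "w \<in> L"
    and "\<And>v. v \<in> L \<Longrightarrow> length v \<le> length w"
  shows "simeq_maximal n w"
  unfolding simeq_maximal_def
proof (intro allI impI)
  fix v assume "set v \<subseteq> set w" and "simeq_n n w v"
  have "w \<in> lists A"
    using assms(2,3) by blast
  then have "v \<in> lists A"
    using \<open>set v \<subseteq> set w\<close> by auto
  with \<open>w \<in> lists A\<close> \<open>simeq_n n w v\<close> have "v \<in> L"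
    using assms(1,3) unfolding n_PT_def by blast
  then show "length v \<le> length w"
    by (rule assms(4))
qed

theorem proposition7:
  fixes A :: "'a set" and L :: "'a list set" and k l :: nat
  assumes "finite A" and "A \<noteq> {}" and "card A = k"
    and "L \<subseteq> lists A" and "finite L" and "L \<noteq> {}"
    and "l = Max (length ` L)"
  shows "1 + real k * (real l powr (1 / real k) - 2) < real (h A L)
         \<and> h A L \<le> l + 1"
proof
  have longest: "length v \<le> l" if "v \<in> L" for v
    using that assms(5,7) by simp
  have "l \<in> length ` L"
    using Max_in[of "length ` L"] assms(5-7) by simp
  then obtain w where "w \<in> L" and "length w = l"
    by blast
  have "n_PT A (Suc l) L"
    using longest by (rule n_PT_Suc_if_length_le)
  then show "h A L \<le> l + 1"
    using h_le by simp
  have "n_PT A (h A L) L"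
    using n_PT_h[OF \<open>n_PT A (Suc l) L\<close>] .
  then have "simeq_maximal (h A L) w"
    using longest_word_simeq_maximal assms(4) \<open>w \<in> L\<close> longest \<open>length w = l\<close> by metis
  moreover have "card (set w) \<le> k"
    using card_mono[OF assms(1)] assms(3,4) \<open>w \<in> L\<close> by auto
  ultimately have "real l + 1 \<le> maximal_length_bound k (h A L)"
    using simeq_maximal_length_bound \<open>length w = l\<close> by blast
  moreover have "0 < k"
    using assms(1-3) by auto
  ultimately show "1 + real k * (real l powr (1 / real k) - 2) < real (h A L)"
    using less_of_maximal_length_bound by blast
qed

end
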